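(* Let $G$ be a finite group acting on a space $X$ and $n\ge 2$. The evaluation map $\epsilon_n : M^G_n(X) \to X^n$, $(\alpha_1,g_1,\alpha_2,\ldots,g_{n-1},\alpha_n)\mapsto(\alpha_1(1),\ldots,\alpha_n(1))$, is a fibration. Moreover, its sectional category equals the sectional category of the saturated diagonal map $\Delta^n_G : X\times G^{n-1}\to X^n$, $(x,g_1,\ldots,g_{n-1})\mapsto (x, xg_1, xg_1g_2,\ldots, xg_1\cdots g_{n-1})$.
   Context: All spaces are Hausdorff, path-connected and locally path-connected; $G$ acts on the right. $PX$ denotes the space of paths $[0,1]\to X$ with the compact-open topology. $M^G_n(X)$ is the subspace of $PX\times G\times PX\times\cdots\times G\times PX$ (with $n$ path factors and $n-1$ group factors, $G$ discrete) consisting of tuples $(\alpha_1,g_1,\alpha_2,g_2,\ldots,\alpha_{n-1},g_{n-1},\alpha_n)$ with $\alpha_i(0)g_i=\alpha_{i+1}(0)$ for $1\le i\le n-1$. The (non-reduced) sectional category $\mathrm{secat}(p)$ of a map $p:E\to B$ is the least $k$ such that $B$ is covered by $k$ open sets on each of which $p$ admits a continuous section up to homotopy (for a fibration, a genuine continuous section); for a general map it is the sectional category of its fibrational replacement. *)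

theory Defs
  imports "HOL-Analysis.Analysis" "HOL-Algebra.Group"
begin

text \<open>Paths are maps [0,1] -> X, represented as functions real => 'a that are
  continuous on [0,1] and take the value undefined outside [0,1].\<close>

definition paths_of :: "'a topology \<Rightarrow> (real \<Rightarrow> 'a) set" where
  "paths_of X = {g. pathin X g \<and> (\<forall>t. t \<notin> {0..1} \<longrightarrow> g t = undefined)}"

definition path_space :: "'a topology \<Rightarrow> (real \<Rightarrow> 'a) topology" where
  "path_space X = topology_generated_by
     {{g \<in> paths_of X. g ` K \<subseteq> U} | K U.
        compactin (top_of_set {0..1::real}) K \<and> openin X U}"

definition right_action ::
  "('g, 'b) monoid_scheme \<Rightarrow> 'a topology \<Rightarrow> ('a \<Rightarrow> 'g \<Rightarrow> 'a) \<Rightarrow> bool" where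
  "right_action G X act \<longleftrightarrow> group G \<and>
     (\<forall>g \<in> carrier G. continuous_map X X (\<lambda>x. act x g)) \<and>
     (\<forall>x \<in> topspace X. act x \<one>\<^bsub>G\<^esub> = x) \<and>
     (\<forall>x \<in> topspace X. \<forall>g \<in> carrier G. \<forall>h \<in> carrier G.
        act (act x g) h = act x (g \<otimes>\<^bsub>G\<^esub> h))"

primrec gprod :: "('g, 'b) monoid_scheme \<Rightarrow> (nat \<Rightarrow> 'g) \<Rightarrow> nat \<Rightarrow> 'g" where
  "gprod G gs 0 = \<one>\<^bsub>G\<^esub>"
| "gprod G gs (Suc i) = gprod G gs i \<otimes>\<^bsub>G\<^esub> gs i"

definition hlp_wrt :: "'z topology \<Rightarrow> 'e topology \<Rightarrow> 'b topology \<Rightarrow> ('e \<Rightarrow> 'b) \<Rightarrow> bool" where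
  "hlp_wrt Z E B p \<longleftrightarrow>
     (\<forall>f H. continuous_map Z E f \<and>
            continuous_map (prod_topology Z (top_of_set {0..1::real})) B H \<and>
            (\<forall>z \<in> topspace Z. H (z, 0) = p (f z))
        \<longrightarrow> (\<exists>K. continuous_map (prod_topology Z (top_of_set {0..1::real})) E K \<and>
                 (\<forall>z \<in> topspace Z. K (z, 0) = f z) \<and>
                 (\<forall>z \<in> topspace Z. \<forall>t \<in> {0..1}. p (K (z, t)) = H (z, t))))"

text \<open>Hurewicz fibration: continuous, with the HLP for every space Z.  Spaces
  are quantified over the (arbitrary) carrier type 'z.\<close>
definition fibration_wrt :: "'z itself \<Rightarrow> 'e topology \<Rightarrow> 'b topology \<Rightarrow> ('e \<Rightarrow> 'b) \<Rightarrow> bool" where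
  "fibration_wrt _ E B p \<longleftrightarrow> continuous_map E B p \<and> (\<forall>Z :: 'z topology. hlp_wrt Z E B p)"

text \<open>Non-reduced sectional category: least k such that B is covered by k open
  sets on each of which p admits a continuous homotopy section (infinity if none).\<close>
definition secat :: "'e topology \<Rightarrow> 'b topology \<Rightarrow> ('e \<Rightarrow> 'b) \<Rightarrow> enat" where
  "secat E B p = Inf (enat ` {k. \<exists>U :: nat \<Rightarrow> 'b set.
      (\<Union>i<k. U i) = topspace B \<and>
      (\<forall>i<k. openin B (U i) \<and>
         (\<exists>s. continuous_map (subtopology B (U i)) E s \<and>
              homotopic_with (\<lambda>_. True) (subtopology B (U i)) B (p \<circ> s) id))})"

text \<open>Points of M^G_n(X): pairs (alpha, gs), alpha_0..alpha_(n-1) paths,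
  gs_0..gs_(n-2) group elements, with alpha_i(0) gs_i = alpha_(i+1)(0).\<close>
definition MG :: "('g, 'b) monoid_scheme \<Rightarrow> 'a topology \<Rightarrow> ('a \<Rightarrow> 'g \<Rightarrow> 'a) \<Rightarrow> nat
                   \<Rightarrow> ((nat \<Rightarrow> real \<Rightarrow> 'a) \<times> (nat \<Rightarrow> 'g)) topology" where
  "MG G X act n = subtopology
     (prod_topology (product_topology (\<lambda>i. path_space X) {..<n})
                    (product_topology (\<lambda>i. discrete_topology (carrier G)) {..<n-1}))
     {(\<alpha>, gs). \<forall>i < n-1. act (\<alpha> i 0) (gs i) = \<alpha> (Suc i) 0}"

definition powX :: "'a topology \<Rightarrow> nat \<Rightarrow> (nat \<Rightarrow> 'a) topology" where
  "powX X n = product_topology (\<lambda>i. X) {..<n}"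

definition eval_map :: "nat \<Rightarrow> (nat \<Rightarrow> real \<Rightarrow> 'a) \<times> (nat \<Rightarrow> 'g) \<Rightarrow> (nat \<Rightarrow> 'a)" where
  "eval_map n = (\<lambda>(\<alpha>, gs). \<lambda>i\<in>{..<n}. \<alpha> i 1)"

definition XG :: "('g, 'b) monoid_scheme \<Rightarrow> 'a topology \<Rightarrow> nat \<Rightarrow> ('a \<times> (nat \<Rightarrow> 'g)) topology" where
  "XG G X n = prod_topology X (product_topology (\<lambda>i. discrete_topology (carrier G)) {..<n-1})"

definition sat_diag :: "('g, 'b) monoid_scheme \<Rightarrow> ('a \<Rightarrow> 'g \<Rightarrow> 'a) \<Rightarrow> nat
                        \<Rightarrow> 'a \<times> (nat \<Rightarrow> 'g) \<Rightarrow> (nat \<Rightarrow> 'a)" where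
  "sat_diag G act n = (\<lambda>(x, gs). \<lambda>i\<in>{..<n}. act x (gprod G gs i))"

end

theory Submission
  imports Defs
begin

text \<open>Evaluation at the endpoint \<open>PX \<rightarrow> X\<close> lifts homotopies by extending each path along
  the track of its endpoint, with the starting point fixed. Doing this in every factor of
  \<open>M^G_n(X)\<close> keeps the group elements and starting points, hence the compatibility conditions,
  and makes \<open>\<epsilon>_n\<close> a fibration.

  For the sectional categories, \<open>(\<alpha>, g) \<mapsto> (\<alpha>_1(0), g)\<close> and the map sending \<open>(x, g)\<close> to the
  constant paths at \<open>x g_1 \<cdots> g_i\<close> are maps between \<open>M^G_n(X)\<close> and \<open>X \<times> G^{n-1}\<close> that
  commute up to homotopy with \<open>\<epsilon>_n\<close> and \<open>\<Delta>^n_G\<close>: the compatibility conditions force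
  \<open>\<alpha>_i(0) = \<alpha>_1(0) g_1 \<cdots> g_{i-1}\<close>, and contracting every path to its starting point is the
  homotopy. Composing homotopy sections with such maps shows that both maps admit homotopy
  sections over the same open sets. Neither argument uses the finiteness of \<open>G\<close> or the
  separation and connectivity hypotheses on \<open>X\<close>.\<close>

section \<open>The compact-open topology on paths\<close>

abbreviation unit_interval :: "real topology" where
  "unit_interval \<equiv> top_of_set {0..1}"

lemma topspace_path_space: "topspace (path_space X) = paths_of X"
  unfolding path_space_def topology_generated_by_topspace
proof
  show "paths_of X \<subseteq> \<Union> {{g \<in> paths_of X. g ` K \<subseteq> U} |K U. compactin unit_interval K \<and> openin X U}"
  proof
    fix g assume "g \<in> paths_of X"
    then have "g \<in> {h \<in> paths_of X. h ` {} \<subseteq> topspace X}" by simp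
    then show "g \<in> \<Union> {{g \<in> paths_of X. g ` K \<subseteq> U} |K U. compactin unit_interval K \<and> openin X U}"
      by (blast intro: compactin_empty)
  qed
qed (use openin_subset in blast)

lemma paths_ofD:
  assumes "g \<in> paths_of X"
  shows "continuous_map unit_interval X g" "\<And>t. t \<in> {0..1} \<Longrightarrow> g t \<in> topspace X"
    "\<And>t. t \<notin> {0..1} \<Longrightarrow> g t = undefined"
  using assms unfolding paths_of_def pathin_def
  by (auto simp: continuous_map_def Pi_iff)

lemma restrict_in_paths_of:
  assumes "continuous_map unit_interval X g"
  shows "(\<lambda>s\<in>{0..1}. g s) \<in> paths_of X"
  unfolding paths_of_def pathin_def using continuous_map_eq[OF assms] by simp

lemma openin_path_space_subbasic:
  assumes "compactin unit_interval K" "openin X U"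
  shows "openin (path_space X) {g \<in> paths_of X. g ` K \<subseteq> U}"
  unfolding path_space_def by (rule topology_generated_by_Basis) (use assms in blast)

lemma continuous_map_into_path_space:
  assumes paths: "\<And>y. y \<in> topspace Y \<Longrightarrow> f y \<in> paths_of X"
    and opens: "\<And>K U. compactin unit_interval K \<Longrightarrow> openin X U
                  \<Longrightarrow> openin Y {y \<in> topspace Y. f y ` K \<subseteq> U}"
  shows "continuous_map Y (path_space X) f"
  unfolding path_space_def
proof (rule continuous_on_generated_topo)
  fix W assume "W \<in> {{g \<in> paths_of X. g ` K \<subseteq> U} |K U. compactin unit_interval K \<and> openin X U}"
  then obtain K U where "compactin unit_interval K" "openin X U" "W = {g \<in> paths_of X. g ` K \<subseteq> U}"
    by blast
  moreover have "f -` W \<inter> topspace Y = {y \<in> topspace Y. f y ` K \<subseteq> U}"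
    using paths calculation(3) by auto
  ultimately show "openin Y (f -` W \<inter> topspace Y)" using opens by simp
next
  have "f ` topspace Y \<subseteq> topspace (path_space X)"
    using paths by (auto simp: topspace_path_space)
  then show "f ` topspace Y \<subseteq> \<Union> {{g \<in> paths_of X. g ` K \<subseteq> U} |K U. compactin unit_interval K \<and> openin X U}"
    unfolding path_space_def topology_generated_by_topspace .
qed

lemma continuous_map_path_eval:
  assumes "t \<in> {0..1}"
  shows "continuous_map (path_space X) X (\<lambda>g. g t)"
  unfolding continuous_map_def topspace_path_space
proof (intro conjI allI impI)
  show "(\<lambda>g. g t) \<in> paths_of X \<rightarrow> topspace X" using paths_ofD(2) assms by blast
  fix U assume "openin X U"
  moreover have "{g \<in> paths_of X. g t \<in> U} = {g \<in> paths_of X. g ` {t} \<subseteq> U}" by auto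
  ultimately show "openin (path_space X) {g \<in> paths_of X. g t \<in> U}"
    using openin_path_space_subbasic[of "{t}"] assms by simp
qed

text \<open>Joint continuity of evaluation rests on the local compactness of \<open>[0,1]\<close>: a point \<open>(g, t)\<close>
  mapped into \<open>U\<close> has the neighbourhood \<open>{h. h ` K \<subseteq> U} \<times> V\<close>, where \<open>K\<close> is a compact
  neighbourhood of \<open>t\<close> with \<open>g ` K \<subseteq> U\<close> and \<open>V \<subseteq> K\<close> is open.\<close>
lemma continuous_map_path_eval_joint:
  "continuous_map (prod_topology (path_space X) unit_interval) X (\<lambda>(g, t). g t)"
  unfolding continuous_map_def
proof (intro conjI allI impI)
  let ?T = "prod_topology (path_space X) unit_interval"
  show "(\<lambda>(g, t). g t) \<in> topspace ?T \<rightarrow> topspace X"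
    by (auto simp: topspace_path_space intro: paths_ofD(2))
  fix U assume U: "openin X U"
  show "openin ?T {p \<in> topspace ?T. (case p of (g, t) \<Rightarrow> g t) \<in> U}" (is "openin ?T ?S")
  proof (subst openin_subopen, intro ballI)
    fix p assume "p \<in> ?S"
    then obtain g t where p: "p = (g, t)" and g: "g \<in> paths_of X" and t: "t \<in> {0..1}"
      and gt: "g t \<in> U"
      by (auto simp: topspace_path_space)
    have "openin unit_interval {s \<in> topspace unit_interval. g s \<in> U}"
      using paths_ofD(1)[OF g] U openin_continuous_map_preimage by blast
    then obtain e where e: "e > 0" "\<And>s. s \<in> {0..1} \<Longrightarrow> dist s t < e \<Longrightarrow> g s \<in> U"
      unfolding openin_euclidean_subtopology_iff using t gt by auto
    define K where "K = {max 0 (t - e/2)..min 1 (t + e/2)}"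
    define V where "V = {0..1} \<inter> {t - e/2<..<t + e/2}"
    have K01: "K \<subseteq> {0..1}" unfolding K_def by auto
    have "compactin unit_interval K" using K01 by (simp add: compactin_subtopology K_def)
    moreover have gK: "g ` K \<subseteq> U"
      using e K01 unfolding K_def dist_real_def by (auto simp: subset_iff)
    ultimately have "openin ?T ({h \<in> paths_of X. h ` K \<subseteq> U} \<times> V)"
      using openin_path_space_subbasic[OF _ U] by (simp add: openin_prod_Times_iff V_def openin_open_Int)
    moreover have "p \<in> {h \<in> paths_of X. h ` K \<subseteq> U} \<times> V"
      using p g gK t e(1) by (simp add: V_def)
    moreover have "V \<subseteq> K" unfolding V_def K_def by auto
    then have "{h \<in> paths_of X. h ` K \<subseteq> U} \<times> V \<subseteq> ?S"
      using K01 by (auto simp: topspace_path_space)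
    ultimately show "\<exists>W. openin ?T W \<and> p \<in> W \<and> W \<subseteq> ?S" by blast
  qed
qed

lemma openin_slices_contained:
  assumes "openin (prod_topology Y Z) W" "compactin Z K"
  shows "openin Y {y \<in> topspace Y. {y} \<times> K \<subseteq> W}"
proof (subst openin_subopen, intro ballI)
  fix y assume "y \<in> {y \<in> topspace Y. {y} \<times> K \<subseteq> W}"
  then obtain A B where "openin Y A" "openin Z B" "y \<in> A" "K \<subseteq> B" "A \<times> B \<subseteq> W"
    using tube_lemma_right[OF assms, of y] by auto
  moreover have "A \<subseteq> topspace Y" using \<open>openin Y A\<close> by (rule openin_subset)
  ultimately show "\<exists>A. openin Y A \<and> y \<in> A \<and> A \<subseteq> {y \<in> topspace Y. {y} \<times> K \<subseteq> W}"
    by blast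
qed

lemma continuous_map_curry_path:
  assumes F: "continuous_map (prod_topology Y unit_interval) X F"
  shows "continuous_map Y (path_space X) (\<lambda>y. \<lambda>s\<in>{0..1}. F (y, s))"
proof (rule continuous_map_into_path_space)
  fix y assume "y \<in> topspace Y"
  then have "continuous_map unit_interval (prod_topology Y unit_interval) (\<lambda>s. (y, s))"
    by (simp add: continuous_map_paired)
  then have "continuous_map unit_interval X (\<lambda>s. F (y, s))"
    using continuous_map_compose[OF _ F] by (simp add: o_def)
  then show "(\<lambda>s\<in>{0..1}. F (y, s)) \<in> paths_of X" by (rule restrict_in_paths_of)
next
  fix K U assume K: "compactin unit_interval K" and U: "openin X U"
  have "K \<subseteq> {0..1}" using compactin_subset_topspace[OF K] by simp
  then have "{y \<in> topspace Y. (\<lambda>s\<in>{0..1}. F (y, s)) ` K \<subseteq> U}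
      = {y \<in> topspace Y. {y} \<times> K \<subseteq> {p \<in> topspace (prod_topology Y unit_interval). F p \<in> U}}"
    by (fastforce simp: image_subset_iff)
  then show "openin Y {y \<in> topspace Y. (\<lambda>s\<in>{0..1}. F (y, s)) ` K \<subseteq> U}"
    using openin_slices_contained[OF openin_continuous_map_preimage[OF F U] K] by simp
qed

text \<open>The path \<open>a\<close> followed by the restriction of \<open>c\<close> to \<open>[0, t]\<close>, reparametrised so that
  \<open>a\<close> runs over \<open>[0, 1/(1+t)]\<close>. For \<open>t = 0\<close> this is \<open>a\<close> itself, so the family is a lift of
  the homotopy \<open>c\<close> of the endpoint of \<open>a\<close> that keeps the starting point fixed.\<close>
definition path_extension :: "(real \<Rightarrow> 'a) \<Rightarrow> (real \<Rightarrow> 'a) \<Rightarrow> real \<Rightarrow> real \<Rightarrow> 'a" where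
  "path_extension a c t =
     (\<lambda>s\<in>{0..1}. if s * (1 + t) \<le> 1 then a (s * (1 + t)) else c (s * (1 + t) - 1))"

lemma path_extension_start [simp]: "path_extension a c t 0 = a 0"
  by (simp add: path_extension_def)

lemma path_extension_end:
  assumes "a 1 = c 0" "t \<in> {0..1}"
  shows "path_extension a c t 1 = c t"
  using assms by (cases "t = 0") (auto simp: path_extension_def)

lemma path_extension_zero:
  assumes "a \<in> paths_of X"
  shows "path_extension a c 0 = a"
  using paths_ofD(3)[OF assms] by (auto simp: path_extension_def)

lemma continuous_map_path_extension:
  assumes A: "continuous_map Y (path_space X) A"
    and C: "continuous_map (prod_topology Y unit_interval) X C"
    and join: "\<And>y. y \<in> topspace Y \<Longrightarrow> C (y, 0) = A y 1"
  shows "continuous_map (prod_topology Y unit_interval) (path_space X)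
           (\<lambda>(y, t). path_extension (A y) (\<lambda>s. C (y, s)) t)"
proof -
  let ?T = "prod_topology (prod_topology Y unit_interval) unit_interval"
  let ?y = "\<lambda>q. fst (fst q)" and ?P = "\<lambda>q. snd q * (1 + snd (fst q))"
  have y: "continuous_map ?T Y ?y"
    using continuous_map_compose[OF continuous_map_fst continuous_map_fst] by (simp add: o_def)
  have "continuous_map ?T euclideanreal snd" "continuous_map ?T euclideanreal (\<lambda>q. snd (fst q))"
    using continuous_map_into_fulltopology[OF continuous_map_snd]
      continuous_map_into_fulltopology[OF continuous_map_compose[OF continuous_map_fst continuous_map_snd]]
    by (simp_all add: o_def)
  then have P: "continuous_map ?T euclideanreal ?P"
    by (intro continuous_intros) auto
  have P_range: "0 \<le> ?P q \<and> ?P q \<le> 2" if "q \<in> topspace ?T" for q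
    using that mult_le_one[of "snd q" "snd (fst q)"] by (auto simp: distrib_left)
  have first: "continuous_map (subtopology ?T {q \<in> topspace ?T. ?P q \<le> 1}) X (\<lambda>q. A (?y q) (?P q))"
  proof -
    have "continuous_map (subtopology ?T {q \<in> topspace ?T. ?P q \<le> 1}) unit_interval ?P"
      using continuous_map_from_subtopology[OF P] P_range
      by (auto simp: continuous_map_in_subtopology)
    moreover have "continuous_map (subtopology ?T {q \<in> topspace ?T. ?P q \<le> 1}) (path_space X) (A \<circ> ?y)"
      by (intro continuous_map_from_subtopology continuous_map_compose[OF y A])
    ultimately show ?thesis
      using continuous_map_compose[OF continuous_map_pairedI continuous_map_path_eval_joint]
      by (simp add: o_def)
  qed
  have second: "continuous_map (subtopology ?T {q \<in> topspace ?T. 1 \<le> ?P q}) X (\<lambda>q. C (?y q, ?P q - 1))"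
  proof -
    have "continuous_map (subtopology ?T {q \<in> topspace ?T. 1 \<le> ?P q}) euclideanreal (\<lambda>q. ?P q - 1)"
      by (intro continuous_map_diff continuous_map_from_subtopology[OF P]) simp
    then have "continuous_map (subtopology ?T {q \<in> topspace ?T. 1 \<le> ?P q}) unit_interval (\<lambda>q. ?P q - 1)"
      using P_range by (auto simp: continuous_map_in_subtopology)
    moreover have "continuous_map (subtopology ?T {q \<in> topspace ?T. 1 \<le> ?P q}) Y ?y"
      by (rule continuous_map_from_subtopology[OF y])
    ultimately show ?thesis
      using continuous_map_compose[OF continuous_map_pairedI C] by (simp add: o_def)
  qed
  have "continuous_map ?T X (\<lambda>q. if ?P q \<le> 1 then A (?y q) (?P q) else C (?y q, ?P q - 1))"
  proof (rule continuous_map_cases_le[OF P continuous_map_const[THEN iffD2] first second])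
    fix q assume "q \<in> topspace ?T" "?P q = 1"
    then show "A (?y q) (?P q) = C (?y q, ?P q - 1)" using join by auto
  qed simp
  from continuous_map_curry_path[OF this] show ?thesis
    by (rule continuous_map_eq) (auto simp: path_extension_def)
qed

section \<open>Sectional category\<close>

lemma homotopy_section_transfer:
  assumes "continuous_map E E' \<phi>" "homotopic_with (\<lambda>_. True) E B (p' \<circ> \<phi>) p"
    and "continuous_map (subtopology B V) E s" "homotopic_with (\<lambda>_. True) (subtopology B V) B (p \<circ> s) id"
  shows "continuous_map (subtopology B V) E' (\<phi> \<circ> s)"
    and "homotopic_with (\<lambda>_. True) (subtopology B V) B (p' \<circ> (\<phi> \<circ> s)) id"
proof -
  show "continuous_map (subtopology B V) E' (\<phi> \<circ> s)"
    using continuous_map_compose[OF assms(3,1)] .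
  have "homotopic_with (\<lambda>_. True) (subtopology B V) B ((p' \<circ> \<phi>) \<circ> s) (p \<circ> s)"
    by (rule homotopic_with_compose_continuous_map_right[OF assms(2,3)]) simp
  then show "homotopic_with (\<lambda>_. True) (subtopology B V) B (p' \<circ> (\<phi> \<circ> s)) id"
    using homotopic_with_trans[OF _ assms(4)] by (simp add: o_assoc)
qed

lemma secat_eq_of_maps_over:
  assumes "continuous_map E E' \<phi>" "homotopic_with (\<lambda>_. True) E B (p' \<circ> \<phi>) p"
    and "continuous_map E' E \<psi>" "homotopic_with (\<lambda>_. True) E' B (p \<circ> \<psi>) p'"
  shows "secat E B p = secat E' B p'"
proof -
  have "(\<exists>s. continuous_map (subtopology B V) E s \<and>
            homotopic_with (\<lambda>_. True) (subtopology B V) B (p \<circ> s) id)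
    \<longleftrightarrow> (\<exists>s. continuous_map (subtopology B V) E' s \<and>
            homotopic_with (\<lambda>_. True) (subtopology B V) B (p' \<circ> s) id)" for V
    using homotopy_section_transfer[OF assms(1,2)] homotopy_section_transfer[OF assms(3,4)] by blast
  then show ?thesis unfolding secat_def by (simp only:)
qed

section \<open>The space \<open>M^G_n(X)\<close>\<close>

lemma product_topology_discrete_finite:
  assumes "finite I"
  shows "product_topology (\<lambda>i. discrete_topology S) I = discrete_topology (PiE I (\<lambda>_. S))"
proof -
  have "openin (product_topology (\<lambda>i. discrete_topology S) I) {f}" if f: "f \<in> PiE I (\<lambda>_. S)" for f
  proof -
    have "{f} = PiE I (\<lambda>i. {f i})" using f by (auto simp: PiE_iff extensional_def fun_eq_iff) (metis)
    moreover have "openin (product_topology (\<lambda>i. discrete_topology S) I) (PiE I (\<lambda>i. {f i}))"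
      using assms f by (subst openin_PiE_gen) (auto simp: PiE_iff)
    ultimately show ?thesis by simp
  qed
  then show ?thesis by (subst eq_commute) (simp add: discrete_topology_unique)
qed

lemma continuous_map_prod_discrete:
  assumes "\<And>d. d \<in> D \<Longrightarrow> continuous_map X Y (\<lambda>x. F x d)"
  shows "continuous_map (prod_topology X (discrete_topology D)) Y (\<lambda>(x, d). F x d)"
  unfolding continuous_map_def
proof (intro conjI allI impI)
  show "(\<lambda>(x, d). F x d) \<in> topspace (prod_topology X (discrete_topology D)) \<rightarrow> topspace Y"
    using assms by (force simp: continuous_map_def Pi_iff)
  fix V assume V: "openin Y V"
  have "{p \<in> topspace (prod_topology X (discrete_topology D)). (case p of (x, d) \<Rightarrow> F x d) \<in> V}
     = (\<Union>d\<in>D. {x \<in> topspace X. F x d \<in> V} \<times> {d})" by auto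
  moreover have "openin (prod_topology X (discrete_topology D)) ({x \<in> topspace X. F x d \<in> V} \<times> {d})"
    if "d \<in> D" for d
    using openin_continuous_map_preimage[OF assms[OF that] V] that by (simp add: openin_prod_Times_iff)
  ultimately show "openin (prod_topology X (discrete_topology D))
      {p \<in> topspace (prod_topology X (discrete_topology D)). (case p of (x, d) \<Rightarrow> F x d) \<in> V}"
    by auto
qed

lemma topspace_MG:
  "(\<alpha>, gs) \<in> topspace (MG G X act n) \<longleftrightarrow>
     \<alpha> \<in> PiE {..<n} (\<lambda>_. paths_of X) \<and> gs \<in> PiE {..<n-1} (\<lambda>_. carrier G) \<and>
     (\<forall>i<n-1. act (\<alpha> i 0) (gs i) = \<alpha> (Suc i) 0)"
  by (simp add: MG_def topspace_path_space topspace_product_topology)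

lemma continuous_map_MG_path:
  assumes "k < n"
  shows "continuous_map (MG G X act n) (path_space X) (\<lambda>x. fst x k)"
  unfolding MG_def
  by (rule continuous_map_from_subtopology)
    (use continuous_map_compose[OF continuous_map_fst
      continuous_map_product_projection[of k "{..<n}" "\<lambda>i. path_space X"]] assms in \<open>simp add: o_def\<close>)

lemma continuous_map_MG_snd:
  "continuous_map (MG G X act n) (product_topology (\<lambda>i. discrete_topology (carrier G)) {..<n-1}) snd"
  unfolding MG_def by (rule continuous_map_from_subtopology) (rule continuous_map_snd)

lemma continuous_map_into_MG:
  assumes paths: "\<And>k. k < n \<Longrightarrow> continuous_map Y (path_space X) (\<lambda>y. fst (f y) k)"
    and ext: "\<And>y. y \<in> topspace Y \<Longrightarrow> fst (f y) \<in> extensional {..<n}"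
    and groups: "continuous_map Y (product_topology (\<lambda>i. discrete_topology (carrier G)) {..<n-1}) (snd \<circ> f)"
    and compatible: "\<And>y i. y \<in> topspace Y \<Longrightarrow> i < n - 1
                        \<Longrightarrow> act (fst (f y) i 0) (snd (f y) i) = fst (f y) (Suc i) 0"
  shows "continuous_map Y (MG G X act n) f"
  unfolding MG_def continuous_map_in_subtopology continuous_map_pairwise
proof (intro conjI groups Pi_I)
  show "continuous_map Y (product_topology (\<lambda>i. path_space X) {..<n}) (fst \<circ> f)"
    using paths ext by (auto simp: continuous_map_componentwise)
  show "f y \<in> {(\<alpha>, gs). \<forall>i<n-1. act (\<alpha> i 0) (gs i) = \<alpha> (Suc i) 0}" if "y \<in> topspace Y" for y
    using compatible[OF that] by (simp add: case_prod_beta)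
qed

lemma eval_map_eq: "eval_map n x = (\<lambda>i\<in>{..<n}. fst x i 1)"
  by (simp add: eval_map_def case_prod_beta)

lemma continuous_map_powX_component:
  assumes "i < n"
  shows "continuous_map (powX X n) X (\<lambda>x. x i)"
  unfolding powX_def using continuous_map_product_projection[of i "{..<n}" "\<lambda>_. X"] assms by simp

lemma continuous_map_eval_map: "continuous_map (MG G X act n) (powX X n) (eval_map n)"
  unfolding powX_def continuous_map_componentwise
proof (intro conjI ballI)
  fix k assume k: "k \<in> {..<n}"
  have "continuous_map (MG G X act n) X ((\<lambda>g. g 1) \<circ> (\<lambda>x. fst x k))"
    by (rule continuous_map_compose[OF continuous_map_MG_path continuous_map_path_eval]) (use k in auto)
  then show "continuous_map (MG G X act n) X (\<lambda>x. eval_map n x k)"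
    using k by (simp add: eval_map_eq o_def)
qed (auto simp: eval_map_eq)

lemma hlp_eval_map: "hlp_wrt Z (MG G X act n) (powX X n) (eval_map n)"
  unfolding hlp_wrt_def
proof (intro allI impI, elim conjE)
  fix f H
  assume f: "continuous_map Z (MG G X act n) f"
    and H: "continuous_map (prod_topology Z unit_interval) (powX X n) H"
    and H0: "\<forall>z\<in>topspace Z. H (z, 0) = eval_map n (f z)"
  define K where "K = (\<lambda>(z, t). ((\<lambda>i\<in>{..<n}. path_extension (fst (f z) i) (\<lambda>s. H (z, s) i) t),
                                  snd (f z)))"
  have fz: "fst (f z) \<in> PiE {..<n} (\<lambda>_. paths_of X)" "snd (f z) \<in> PiE {..<n-1} (\<lambda>_. carrier G)"
    "\<forall>i<n-1. act (fst (f z) i 0) (snd (f z) i) = fst (f z) (Suc i) 0"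
    if "z \<in> topspace Z" for z
  proof -
    have "(fst (f z), snd (f z)) \<in> topspace (MG G X act n)"
      using continuous_map_image_subset_topspace[OF f] that by auto
    then show "fst (f z) \<in> PiE {..<n} (\<lambda>_. paths_of X)" "snd (f z) \<in> PiE {..<n-1} (\<lambda>_. carrier G)"
      "\<forall>i<n-1. act (fst (f z) i 0) (snd (f z) i) = fst (f z) (Suc i) 0"
      unfolding topspace_MG by blast+
  qed
  have Hz: "H (z, t) \<in> extensional {..<n}" if "z \<in> topspace Z" "t \<in> {0..1}" for z t
    using continuous_map_image_subset_topspace[OF H] that
    by (force simp: powX_def topspace_product_topology PiE_iff)
  have path_k: "continuous_map (prod_topology Z unit_interval) (path_space X)
                  (\<lambda>(z, t). path_extension (fst (f z) k) (\<lambda>s. H (z, s) k) t)" if "k < n" for k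
  proof (rule continuous_map_path_extension)
    show "continuous_map Z (path_space X) (\<lambda>z. fst (f z) k)"
      using continuous_map_compose[OF f continuous_map_MG_path[OF that]] by (simp add: o_def)
    show "continuous_map (prod_topology Z unit_interval) X (\<lambda>p. H p k)"
      using continuous_map_compose[OF H continuous_map_powX_component[OF that]] by (simp add: o_def)
    show "H (z, 0) k = fst (f z) k 1" if "z \<in> topspace Z" for z
      using H0 that \<open>k < n\<close> by (simp add: eval_map_eq)
  qed
  show "\<exists>K. continuous_map (prod_topology Z unit_interval) (MG G X act n) K \<and>
            (\<forall>z\<in>topspace Z. K (z, 0) = f z) \<and>
            (\<forall>z\<in>topspace Z. \<forall>t\<in>{0..1}. eval_map n (K (z, t)) = H (z, t))"
  proof (intro exI conjI ballI)
    show "continuous_map (prod_topology Z unit_interval) (MG G X act n) K"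
    proof (rule continuous_map_into_MG)
      show "continuous_map (prod_topology Z unit_interval)
              (product_topology (\<lambda>i. discrete_topology (carrier G)) {..<n-1}) (snd \<circ> K)"
        using continuous_map_compose[OF continuous_map_fst continuous_map_compose[OF f continuous_map_MG_snd]]
        by (simp add: K_def o_def case_prod_beta)
    qed (use path_k[unfolded case_prod_beta] fz in \<open>auto simp: K_def case_prod_beta\<close>)
  next
    fix z assume z: "z \<in> topspace Z"
    have "(\<lambda>i\<in>{..<n}. path_extension (fst (f z) i) (\<lambda>s. H (z, s) i) 0) = (\<lambda>i\<in>{..<n}. fst (f z) i)"
      by (intro restrict_ext path_extension_zero[of _ X] PiE_mem[OF fz(1)[OF z]])
    also have "\<dots> = fst (f z)" using fz(1)[OF z] by (rule PiE_restrict)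
    finally have "(\<lambda>i\<in>{..<n}. path_extension (fst (f z) i) (\<lambda>s. H (z, s) i) 0) = fst (f z)" .
    then show "K (z, 0) = f z" by (simp add: K_def prod_eq_iff)
  next
    fix z and t :: real assume z: "z \<in> topspace Z" and t: "t \<in> {0..1}"
    have "eval_map n (K (z, t)) = (\<lambda>i\<in>{..<n}. path_extension (fst (f z) i) (\<lambda>s. H (z, s) i) t 1)"
      unfolding K_def eval_map_eq by (intro restrict_ext) simp
    also have "\<dots> = (\<lambda>i\<in>{..<n}. H (z, t) i)"
      using H0 z t by (intro restrict_ext path_extension_end) (auto simp: eval_map_eq)
    also have "\<dots> = H (z, t)" using Hz[OF z t] by (rule extensional_restrict)
    finally show "eval_map n (K (z, t)) = H (z, t)" .
  qed
qed

lemma gprod_in_carrier: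
  assumes "group G" "\<And>j. j < i \<Longrightarrow> gs j \<in> carrier G"
  shows "gprod G gs i \<in> carrier G"
  using assms(2) by (induction i) (simp_all add: group.is_monoid[OF assms(1)] monoid.m_closed monoid.one_closed)

lemma act_gprod_Suc:
  assumes "right_action G X act" "x \<in> topspace X" "\<And>j. j \<le> i \<Longrightarrow> gs j \<in> carrier G"
  shows "act (act x (gprod G gs i)) (gs i) = act x (gprod G gs (Suc i))"
proof -
  have "gprod G gs i \<in> carrier G"
    using assms(1,3) by (intro gprod_in_carrier) (auto simp: right_action_def)
  then show ?thesis using assms by (simp add: right_action_def)
qed

lemma MG_start_point:
  assumes "right_action G X act" "(\<alpha>, gs) \<in> topspace (MG G X act n)" "i < n"
  shows "\<alpha> i 0 = act (\<alpha> 0 0) (gprod G gs i)"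
proof -
  have "\<alpha> 0 \<in> paths_of X" using assms(2,3) by (auto simp: topspace_MG)
  then have start: "\<alpha> 0 0 \<in> topspace X" by (rule paths_ofD(2)) simp
  show ?thesis
    using assms(3)
  proof (induction i)
    case 0
    then show ?case using assms(1) start by (simp add: right_action_def)
  next
    case (Suc i)
    have "gs j \<in> carrier G" if "j \<le> i" for j using assms(2) Suc.prems that by (auto simp: topspace_MG)
    moreover have "act (\<alpha> i 0) (gs i) = \<alpha> (Suc i) 0" using assms(2) Suc.prems by (auto simp: topspace_MG)
    ultimately show ?case using Suc act_gprod_Suc[OF assms(1) start] by simp
  qed
qed

definition MG_to_XG :: "(nat \<Rightarrow> real \<Rightarrow> 'a) \<times> (nat \<Rightarrow> 'g) \<Rightarrow> 'a \<times> (nat \<Rightarrow> 'g)" where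
  "MG_to_XG x = (fst x 0 0, snd x)"

definition XG_to_MG :: "('g, 'b) monoid_scheme \<Rightarrow> ('a \<Rightarrow> 'g \<Rightarrow> 'a) \<Rightarrow> nat
                        \<Rightarrow> 'a \<times> (nat \<Rightarrow> 'g) \<Rightarrow> (nat \<Rightarrow> real \<Rightarrow> 'a) \<times> (nat \<Rightarrow> 'g)" where
  "XG_to_MG G act n y = ((\<lambda>i\<in>{..<n}. \<lambda>s\<in>{0..1}. act (fst y) (gprod G (snd y) i)), snd y)"

lemma continuous_map_MG_to_XG:
  assumes "0 < n"
  shows "continuous_map (MG G X act n) (XG G X n) MG_to_XG"
  unfolding XG_def MG_to_XG_def case_prod_beta
proof (rule continuous_map_pairedI)
  show "continuous_map (MG G X act n) X (\<lambda>x. fst x 0 0)"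
    using continuous_map_compose[OF continuous_map_MG_path[OF assms] continuous_map_path_eval[of 0]]
    by (simp add: o_def)
qed (rule continuous_map_MG_snd)

lemma continuous_map_XG_to_MG:
  assumes action: "right_action G X act"
  shows "continuous_map (XG G X n) (MG G X act n) (XG_to_MG G act n)"
proof (rule continuous_map_into_MG)
  have group: "group G" using action by (simp add: right_action_def)
  fix k assume k: "k < n"
  have "continuous_map (XG G X n) X (\<lambda>(x, gs). act x (gprod G gs k))"
    unfolding XG_def product_topology_discrete_finite[OF finite_lessThan]
  proof (rule continuous_map_prod_discrete)
    fix gs assume "gs \<in> PiE {..<n-1} (\<lambda>_. carrier G)"
    then have "gprod G gs k \<in> carrier G"
      using k by (intro gprod_in_carrier[OF group] PiE_mem[of gs "{..<n-1}"]) auto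
    then show "continuous_map X X (\<lambda>x. act x (gprod G gs k))"
      using action by (simp add: right_action_def)
  qed
  then have "continuous_map (prod_topology (XG G X n) unit_interval) X
               (\<lambda>p. act (fst (fst p)) (gprod G (snd (fst p)) k))"
    using continuous_map_compose[OF continuous_map_fst] by (fastforce simp: o_def case_prod_beta)
  from continuous_map_curry_path[OF this]
  show "continuous_map (XG G X n) (path_space X) (\<lambda>y. fst (XG_to_MG G act n y) k)"
    using k by (simp add: XG_to_MG_def)
next
  show "continuous_map (XG G X n) (product_topology (\<lambda>i. discrete_topology (carrier G)) {..<n-1})
          (snd \<circ> XG_to_MG G act n)"
    unfolding XG_def XG_to_MG_def by (simp add: o_def case_prod_beta continuous_map_snd)
  show "act (fst (XG_to_MG G act n y) i 0) (snd (XG_to_MG G act n y) i) = fst (XG_to_MG G act n y) (Suc i) 0"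
    if "y \<in> topspace (XG G X n)" "i < n - 1" for y i
    using that act_gprod_Suc[OF action]
    by (auto simp: XG_to_MG_def XG_def topspace_product_topology case_prod_beta PiE_iff)
qed (simp add: XG_to_MG_def)

lemma eval_map_XG_to_MG: "eval_map n (XG_to_MG G act n x) = sat_diag G act n x"
  by (simp add: eval_map_eq XG_to_MG_def sat_diag_def case_prod_beta cong: restrict_cong)

text \<open>At time \<open>t\<close> the homotopy evaluates every path at \<open>t\<close>; at \<open>t = 0\<close> this is
  \<open>\<Delta>^n_G\<close> applied to the first starting point, by \<open>MG_start_point\<close>.\<close>
lemma homotopic_sat_diag_MG_to_XG:
  assumes "right_action G X act"
  shows "homotopic_with (\<lambda>_. True) (MG G X act n) (powX X n) (sat_diag G act n \<circ> MG_to_XG) (eval_map n)"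
  unfolding homotopic_with[where P="\<lambda>_. True", simplified]
proof (intro exI conjI ballI)
  let ?h = "\<lambda>(t, (\<alpha>, gs)). \<lambda>i\<in>{..<n}. \<alpha> i t"
  show "continuous_map (prod_topology unit_interval (MG G X act n)) (powX X n) ?h"
    unfolding powX_def continuous_map_componentwise
  proof (intro conjI ballI)
    fix k assume "k \<in> {..<n}"
    then have "continuous_map (prod_topology unit_interval (MG G X act n)) (path_space X) (\<lambda>p. fst (snd p) k)"
      using continuous_map_compose[OF continuous_map_snd continuous_map_MG_path] by (simp add: o_def)
    then show "continuous_map (prod_topology unit_interval (MG G X act n)) X (\<lambda>p. ?h p k)"
      using continuous_map_compose[OF continuous_map_pairedI[OF _ continuous_map_fst] continuous_map_path_eval_joint]
        \<open>k \<in> {..<n}\<close>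
      by (simp add: o_def case_prod_beta)
  qed (auto simp: case_prod_beta)
  fix x assume "x \<in> topspace (MG G X act n)"
  moreover obtain \<alpha> gs where "x = (\<alpha>, gs)" by fastforce
  ultimately show "?h (0, x) = (sat_diag G act n \<circ> MG_to_XG) x" "?h (1, x) = eval_map n x"
    using MG_start_point[OF assms]
    by (auto simp: sat_diag_def MG_to_XG_def eval_map_eq intro!: restrict_ext)
qed

theorem mainTheorem1:
  fixes G :: "('g, 'b) monoid_scheme" and X :: "'a topology"
    and act :: "'a \<Rightarrow> 'g \<Rightarrow> 'a" and n :: nat
  assumes "Hausdorff_space X" and "path_connected_space X"
    and "locally_path_connected_space X"
    and "right_action G X act" and "finite (carrier G)"
    and "n \<ge> 2"
  shows "fibration_wrt TYPE('z) (MG G X act n) (powX X n) (eval_map n)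
         \<and> secat (MG G X act n) (powX X n) (eval_map n)
           = secat (XG G X n) (powX X n) (sat_diag G act n)"
proof
  show "fibration_wrt TYPE('z) (MG G X act n) (powX X n) (eval_map n)"
    unfolding fibration_wrt_def by (intro conjI allI continuous_map_eval_map hlp_eval_map)
  have "0 < n" using assms(6) by simp
  moreover have "homotopic_with (\<lambda>_. True) (XG G X n) (powX X n)
                   (eval_map n \<circ> XG_to_MG G act n) (sat_diag G act n)"
    using continuous_map_compose[OF continuous_map_XG_to_MG[OF assms(4)] continuous_map_eval_map]
    by (intro homotopic_with_equal) (auto simp: eval_map_XG_to_MG)
  ultimately show "secat (MG G X act n) (powX X n) (eval_map n) = secat (XG G X n) (powX X n) (sat_diag G act n)"
    by (intro secat_eq_of_maps_over[OF continuous_map_MG_to_XG homotopic_sat_diag_MG_to_XG[OF assms(4)]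
          continuous_map_XG_to_MG[OF assms(4)]])
qed

end
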